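(* Let $p$ be one of $(123,\emptyset,\{0\})$, $(123,\{0\},\{2\})$, $(132,\emptyset,\{0\})$, $(132,\{0\},\{2\})$, or any pattern in the same symmetry class as one of these. Then for all $n\ge1$, \[a_n(p)=\sum_{k=0}^{n-1}\frac{(n-1)!}{k!}.\]
   Context: For $n\ge1$, $\mathcal S_n$ is the set of permutations $\pi=\pi_1\cdots\pi_n$ of $[n]$. A bi-vincular pattern of length $k$ is a triple $p=(\sigma,X,Y)$ with $\sigma\in\mathcal S_k$ and $X,Y\subseteq\{0,1,\dots,k\}$. A permutation $\pi\in\mathcal S_n$ contains $p$ if there are indices $1\le i_1<\dots<i_k\le n$ such that $(\pi_{i_1},\dots,\pi_{i_k})$ is order-isomorphic to $\sigma$ and, letting $j_1<\dots<j_k$ be the values $\pi_{i_1},\dots,\pi_{i_k}$ sorted increasingly and setting $i_0=j_0=0$, $i_{k+1}=j_{k+1}=n+1$, one has $i_{x+1}=i_x+1$ for all $x\in X$ and $j_{y+1}=j_y+1$ for all $y\in Y$. Otherwise $\pi$ avoids $p$; $a_n(p)$ is the number of $\pi\in\mathcal S_n$ avoiding $p$. Symmetries: $p^{i}=(\sigma^{-1},Y,X)$, $p^{r}=(\sigma^{r},\{k-x:x\in X\},Y)$, $p^{c}=(\sigma^{c},X,\{k-y:y\in Y\})$ with $\sigma^r_j=\sigma_{k+1-j}$, $\sigma^c_j=k+1-\sigma_j$; the symmetry class of $p$ consists of all patterns obtained from $p$ by finitely many applications of these maps. *)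

theory Defs
  imports Complex_Main
begin

text \<open>Permutations of [n] as lists pi = [pi_1, ..., pi_n] (list index i-1 holds pi_i).\<close>
definition perms :: "nat \<Rightarrow> nat list set" where
  "perms n = {\<pi>. length \<pi> = n \<and> distinct \<pi> \<and> set \<pi> = {1..n}}"

type_synonym bvpat = "nat list \<times> nat set \<times> nat set"

definition is_bvpat :: "bvpat \<Rightarrow> bool" where
  "is_bvpat p = (case p of (\<sigma>, X, Y) \<Rightarrow>
     \<sigma> \<in> perms (length \<sigma>) \<and> X \<subseteq> {0..length \<sigma>} \<and> Y \<subseteq> {0..length \<sigma>})"

text \<open>Containment. The list ii holds the indices i_1 < ... < i_k (1-based positions);
  I = [i_0, i_1, ..., i_k, i_{k+1}] and J = [j_0, j_1, ..., j_k, j_{k+1}] with the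
  sorted values j_1 < ... < j_k.\<close>
definition contains :: "nat list \<Rightarrow> bvpat \<Rightarrow> bool" where
  "contains \<pi> p = (case p of (\<sigma>, X, Y) \<Rightarrow>
     (\<exists>ii. length ii = length \<sigma> \<and> sorted_wrt (<) ii \<and> set ii \<subseteq> {1..length \<pi>} \<and>
        (let vals = map (\<lambda>i. \<pi> ! (i - 1)) ii;
             js = sort vals;
             I = [0] @ ii @ [length \<pi> + 1];
             J = [0] @ js @ [length \<pi> + 1]
         in (\<forall>a < length \<sigma>. \<forall>b < length \<sigma>. (vals ! a < vals ! b \<longleftrightarrow> \<sigma> ! a < \<sigma> ! b)) \<and>
            (\<forall>x \<in> X. I ! (x + 1) = I ! x + 1) \<and>
            (\<forall>y \<in> Y. J ! (y + 1) = J ! y + 1))))"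

definition avoiders :: "nat \<Rightarrow> bvpat \<Rightarrow> nat" where
  "avoiders n p = card {\<pi> \<in> perms n. \<not> contains \<pi> p}"

definition inv_perm :: "nat list \<Rightarrow> nat list" where
  "inv_perm \<sigma> = map (\<lambda>v. Suc (THE i. i < length \<sigma> \<and> \<sigma> ! i = v)) [1..<length \<sigma> + 1]"

definition pat_inv :: "bvpat \<Rightarrow> bvpat" where
  "pat_inv p = (case p of (\<sigma>, X, Y) \<Rightarrow> (inv_perm \<sigma>, Y, X))"

definition pat_rev :: "bvpat \<Rightarrow> bvpat" where
  "pat_rev p = (case p of (\<sigma>, X, Y) \<Rightarrow> (rev \<sigma>, (\<lambda>x. length \<sigma> - x) ` X, Y))"

definition pat_compl :: "bvpat \<Rightarrow> bvpat" where
  "pat_compl p = (case p of (\<sigma>, X, Y) \<Rightarrow>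
     (map (\<lambda>v. length \<sigma> + 1 - v) \<sigma>, X, (\<lambda>y. length \<sigma> - y) ` Y))"

inductive_set sym_class :: "bvpat \<Rightarrow> bvpat set" for p :: bvpat where
  base: "p \<in> sym_class p"
| inv: "q \<in> sym_class p \<Longrightarrow> pat_inv q \<in> sym_class p"
| rev: "q \<in> sym_class p \<Longrightarrow> pat_rev q \<in> sym_class p"
| compl: "q \<in> sym_class p \<Longrightarrow> pat_compl q \<in> sym_class p"

end

theory Submission
  imports Defs
begin

text \<open>
  Containment of \<open>(\<sigma>, X, Y)\<close> in \<open>\<pi>\<close> is recast as the existence of two strictly increasing maps
  \<open>a, b\<close> on \<open>{0..k+1}\<close> with \<open>a 0 = b 0 = 0\<close>, \<open>a (k+1) = b (k+1) = n+1\<close> and \<open>\<pi>(a t) = b(\<sigma> t)\<close>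
  (positions and values of an occurrence); the conditions \<open>X\<close> and \<open>Y\<close> become
  \<open>a (x+1) = a x + 1\<close> and \<open>b (y+1) = b y + 1\<close>. In this form reversal and complementation reflect
  \<open>a\<close> resp. \<open>b\<close> and inversion swaps them, so the number of avoiders is constant on symmetry classes.

  Up to inversion, which turns \<open>({0}, {2})\<close> into \<open>({2}, {0})\<close>, the four patterns are the seeds
  \<open>([1, s2, s3], X, {0})\<close> with \<open>s2 s3 \<in> {23, 32}\<close> and \<open>X \<in> {{}, {2}}\<close>. As \<open>0 \<in> Y\<close>, the \<open>1\<close> of the
  pattern must be the entry \<open>1\<close> of \<open>\<pi>\<close>, so \<open>\<pi>\<close> avoids a seed iff the entries after \<open>1\<close> are decreasing
  (for \<open>123\<close>) resp. increasing (for \<open>132\<close>); for \<open>X = {2}\<close> only adjacent entries are constrained,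
  which is the same by transitivity. Such \<open>\<pi>\<close> is determined by the word of distinct letters from
  \<open>{2..n}\<close> in front of \<open>1\<close>, and there are \<open>\<Sum>k\<le>n-1. (n-1)!/k!\<close> such words.
\<close>

lemma strict_mono_on_atLeastAtMost_SucI:
  fixes f :: "nat \<Rightarrow> 'a::order"
  assumes "\<And>t. t < K \<Longrightarrow> f t < f (Suc t)"
  shows "strict_mono_on {0..K} f"
proof (rule strict_mono_onI)
  fix r s assume "r \<in> {0..K}" "s \<in> {0..K}" "r < s"
  then show "f r < f s"
  proof (induction s)
    case (Suc s)
    then show ?case using assms[of s] by (cases "r = s") (auto intro: less_trans)
  qed simp
qed

lemma sorted_wrt_drop_iff:
  "sorted_wrt R (drop k xs) \<longleftrightarrow> (\<forall>i j. k \<le> i \<longrightarrow> i < j \<longrightarrow> j < length xs \<longrightarrow> R (xs ! i) (xs ! j))"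
proof (intro iffI allI impI)
  fix i j assume s: "sorted_wrt R (drop k xs)" and ij: "k \<le> i" "i < j" "j < length xs"
  then have "i - k < j - k" "j - k < length (drop k xs)" by auto
  then have "R (drop k xs ! (i - k)) (drop k xs ! (j - k))" using s unfolding sorted_wrt_iff_nth_less by blast
  then show "R (xs ! i) (xs ! j)" using ij by simp
next
  assume h: "\<forall>i j. k \<le> i \<longrightarrow> i < j \<longrightarrow> j < length xs \<longrightarrow> R (xs ! i) (xs ! j)"
  show "sorted_wrt R (drop k xs)" unfolding sorted_wrt_iff_nth_less
  proof (intro allI impI)
    fix i j assume "i < j" "j < length (drop k xs)"
    then show "R (drop k xs ! i) (drop k xs ! j)" using h[rule_format, of "k + i" "k + j"] by simp
  qed
qed

lemma sorted_wrt_drop_iff_adjacent: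
  assumes "transp R"
  shows "sorted_wrt R (drop k xs) \<longleftrightarrow> (\<forall>i. k \<le> i \<longrightarrow> Suc i < length xs \<longrightarrow> R (xs ! i) (xs ! Suc i))"
proof (intro iffI allI impI)
  fix i assume "sorted_wrt R (drop k xs)" "k \<le> i" "Suc i < length xs"
  then show "R (xs ! i) (xs ! Suc i)" using sorted_wrt_drop_iff by blast
next
  assume h: "\<forall>i. k \<le> i \<longrightarrow> Suc i < length xs \<longrightarrow> R (xs ! i) (xs ! Suc i)"
  show "sorted_wrt R (drop k xs)" unfolding sorted_wrt_iff_nth_Suc_transp[OF assms]
  proof (intro allI impI)
    fix i assume "Suc i < length (drop k xs)"
    then show "R (drop k xs ! i) (drop k xs ! Suc i)" using h[rule_format, of "k + i"] by simp
  qed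
qed

lemma nth_framed_map:
  assumes "f 0 = 0" "f (Suc k) = m" "x \<le> Suc k"
  shows "([0] @ map f [1..<Suc k] @ [m]) ! x = f x"
proof (cases x)
  case (Suc y)
  then have "y < k \<or> y = k" using assms(3) by auto
  then show ?thesis using Suc assms(2) by (auto simp: nth_append simp del: upt_Suc)
qed (use assms(1) in simp)

lemma card_distinct_lists_subset:
  assumes A: "finite A"
  shows "real (card {xs. distinct xs \<and> set xs \<subseteq> A}) = (\<Sum>k = 0..card A. fact (card A) / fact k)"
proof -
  let ?N = "card A"
  let ?Lj = "\<lambda>j. {xs. length xs = j \<and> distinct xs \<and> set xs \<subseteq> A}"
  have eq: "{xs. distinct xs \<and> set xs \<subseteq> A} = (\<Union>j\<in>{0..?N}. ?Lj j)"
    using A by (auto dest: card_mono simp: distinct_card[symmetric])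
  have fin: "finite (?Lj j)" for j
    using finite_lists_length_eq[OF A, of j] by (rule rev_finite_subset) auto
  have "card {xs. distinct xs \<and> set xs \<subseteq> A} = (\<Sum>j = 0..?N. card (?Lj j))"
    unfolding eq by (rule card_UN_disjoint) (use fin in auto)
  also have "\<dots> = (\<Sum>j = 0..?N. fact ?N div fact (?N - j))"
    using card_lists_distinct_length_eq[OF A] fact_div_fact by (intro sum.cong) auto
  finally have "real (card {xs. distinct xs \<and> set xs \<subseteq> A}) = (\<Sum>j = 0..?N. fact ?N / fact (?N - j))"
    by (simp add: real_of_nat_div fact_dvd)
  also have "\<dots> = (\<Sum>k = 0..?N. fact ?N / fact k)"
    using sum.atLeastAtMost_rev[of "\<lambda>k. fact ?N / fact k :: real" 0 ?N] by simp
  finally show ?thesis .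
qed

lemma permsI: "length \<pi> = n \<Longrightarrow> distinct \<pi> \<Longrightarrow> set \<pi> = {1..n} \<Longrightarrow> \<pi> \<in> perms n"
  unfolding perms_def by blast

lemma permsD: "\<pi> \<in> perms n \<Longrightarrow> length \<pi> = n \<and> distinct \<pi> \<and> set \<pi> = {1..n}"
  unfolding perms_def by simp

lemma perms_nth_mem: "\<pi> \<in> perms n \<Longrightarrow> i < n \<Longrightarrow> \<pi> ! i \<in> {1..n}"
  using permsD nth_mem by metis

lemma perms_ex_nth: "\<pi> \<in> perms n \<Longrightarrow> v \<in> {1..n} \<Longrightarrow> \<exists>i<n. \<pi> ! i = v"
  using permsD in_set_conv_nth by metis

lemma perms_nth_eq_iff: "\<pi> \<in> perms n \<Longrightarrow> i < n \<Longrightarrow> j < n \<Longrightarrow> \<pi> ! i = \<pi> ! j \<longleftrightarrow> i = j"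
  using permsD nth_eq_iff_index_eq by metis

lemma rev_perms: "\<pi> \<in> perms n \<Longrightarrow> rev \<pi> \<in> perms n"
  using permsD[of \<pi> n] permsI[of "rev \<pi>" n] by simp

lemma compl_perms:
  assumes "\<pi> \<in> perms n"
  shows "map (\<lambda>v. Suc n - v) \<pi> \<in> perms n"
proof -
  have \<pi>: "length \<pi> = n" "distinct \<pi>" "set \<pi> = {1..n}" using permsD[OF assms] by auto
  have "inj_on (\<lambda>v. Suc n - v) {1..n}" by (rule inj_onI) auto
  moreover have "(\<lambda>v. Suc n - v) ` {1..n} = {1..n}"
  proof (intro equalityI subsetI)
    fix x assume "x \<in> {1..n}"
    then have "x = Suc n - (Suc n - x)" "Suc n - x \<in> {1..n}" by auto
    then show "x \<in> (\<lambda>v. Suc n - v) ` {1..n}" by blast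
  qed auto
  ultimately show ?thesis using \<pi> by (intro permsI) (auto simp: distinct_map)
qed

lemma compl_compl_perm: "\<pi> \<in> perms n \<Longrightarrow> map (\<lambda>v. Suc n - v) (map (\<lambda>v. Suc n - v) \<pi>) = \<pi>"
  using permsD[of \<pi> n] by (auto intro: map_idI)

lemma inv_perm_nth_eq_Suc_iff:
  assumes "\<sigma> \<in> perms k" "s < k" "t < k"
  shows "inv_perm \<sigma> ! s = Suc t \<longleftrightarrow> \<sigma> ! t = Suc s"
proof -
  obtain i where i: "i < k" "\<sigma> ! i = Suc s" using perms_ex_nth[OF assms(1), of "Suc s"] assms by auto
  have "(THE i. i < k \<and> \<sigma> ! i = Suc s) = i"
    using i perms_nth_eq_iff[OF assms(1) _ i(1)] by (intro the_equality) auto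
  moreover have "[1..<k + 1] ! s = Suc s" using assms(2) by (simp del: upt_Suc)
  ultimately have "inv_perm \<sigma> ! s = Suc i"
    using assms permsD[OF assms(1)] unfolding inv_perm_def by (simp del: upt_Suc)
  then show ?thesis using i perms_nth_eq_iff[OF assms(1) i(1) assms(3)] by auto
qed

lemma length_inv_perm [simp]: "length (inv_perm \<sigma>) = length \<sigma>"
  unfolding inv_perm_def by (simp del: upt_Suc)

lemma inv_perm_perms:
  assumes "\<sigma> \<in> perms k"
  shows "inv_perm \<sigma> \<in> perms k"
proof -
  let ?\<tau> = "inv_perm \<sigma>"
  have len: "length ?\<tau> = k" using permsD[OF assms] by simp
  have img: "\<exists>t<k. ?\<tau> ! s = Suc t \<and> \<sigma> ! t = Suc s" if s: "s < k" for s
  proof -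
    obtain t where "t < k" "\<sigma> ! t = Suc s" using perms_ex_nth[OF assms, of "Suc s"] s by auto
    then show ?thesis using inv_perm_nth_eq_Suc_iff[OF assms s] by blast
  qed
  have "distinct ?\<tau>"
  proof (subst distinct_conv_nth, intro allI impI)
    fix s s' assume "s < length ?\<tau>" "s' < length ?\<tau>" "s \<noteq> s'"
    then show "?\<tau> ! s \<noteq> ?\<tau> ! s'"
      using img[of s] img[of s'] len by (metis Suc_inject)
  qed
  moreover have "set ?\<tau> \<subseteq> {1..k}" using img len by (fastforce simp: in_set_conv_nth)
  ultimately have "set ?\<tau> = {1..k}" using len by (simp add: card_subset_eq distinct_card)
  then show ?thesis using len \<open>distinct ?\<tau>\<close> by (simp add: permsI)
qed

lemma inv_perm_eqI:
  assumes "\<sigma> \<in> perms k" "\<tau> \<in> perms k" and "\<And>s t. s < k \<Longrightarrow> t < k \<Longrightarrow> \<tau> ! s = Suc t \<longleftrightarrow> \<sigma> ! t = Suc s"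
  shows "inv_perm \<sigma> = \<tau>"
proof (rule nth_equalityI)
  show "length (inv_perm \<sigma>) = length \<tau>" using assms(1,2) permsD by simp
  fix s assume "s < length (inv_perm \<sigma>)"
  then have s: "s < k" using permsD[OF assms(1)] by simp
  obtain t where t: "\<tau> ! s = Suc t" "t < k" using perms_nth_mem[OF assms(2) s] by (cases "\<tau> ! s") auto
  then show "inv_perm \<sigma> ! s = \<tau> ! s" using inv_perm_nth_eq_Suc_iff[OF assms(1) s t(2)] assms(3)[OF s t(2)] by simp
qed

lemma inv_perm_inv_perm:
  assumes "\<sigma> \<in> perms k"
  shows "inv_perm (inv_perm \<sigma>) = \<sigma>"
  using assms inv_perm_perms[OF assms] inv_perm_nth_eq_Suc_iff[OF assms]
  by (intro inv_perm_eqI) (auto simp: inv_perm_nth_eq_Suc_iff)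

lemma order_iso_distinct:
  assumes "\<sigma> \<in> perms k" "length vs = k" "\<And>a b. a < k \<Longrightarrow> b < k \<Longrightarrow> vs ! a < vs ! b \<longleftrightarrow> \<sigma> ! a < \<sigma> ! b"
  shows "distinct vs"
proof (subst distinct_conv_nth, intro allI impI)
  fix i j assume "i < length vs" "j < length vs" "i \<noteq> j"
  then have "i < k" "j < k" "\<sigma> ! i \<noteq> \<sigma> ! j" using assms(2) perms_nth_eq_iff[OF assms(1)] by auto
  then show "vs ! i \<noteq> vs ! j" using assms(3)[of i j] assms(3)[of j i] by (auto simp: linorder_neq_iff)
qed

text \<open>Sorting a list order-isomorphic to \<open>\<sigma>\<close> amounts to reading it along \<open>inv_perm \<sigma>\<close>.\<close>
lemma sort_nth_order_iso:
  assumes \<sigma>: "\<sigma> \<in> perms k" and len: "length vs = k"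
    and iso: "\<And>a b. a < k \<Longrightarrow> b < k \<Longrightarrow> vs ! a < vs ! b \<longleftrightarrow> \<sigma> ! a < \<sigma> ! b"
    and t: "t < k"
  shows "sort vs ! (\<sigma> ! t - 1) = vs ! t"
proof -
  define \<tau> where "\<tau> = inv_perm \<sigma>"
  have \<tau>: "\<tau> \<in> perms k" using inv_perm_perms[OF \<sigma>] \<tau>_def by simp
  define w where "w = map (\<lambda>u. vs ! (u - 1)) \<tau>"
  have lw: "length w = k" using permsD[OF \<tau>] w_def by simp
  have \<tau>_nth: "\<tau> ! s - 1 < k \<and> \<sigma> ! (\<tau> ! s - 1) = Suc s \<and> w ! s = vs ! (\<tau> ! s - 1)" if s: "s < k" for s
  proof -
    have "\<tau> ! s = Suc (\<tau> ! s - 1)" "\<tau> ! s - 1 < k" using perms_nth_mem[OF \<tau> s] by auto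
    then show ?thesis using inv_perm_nth_eq_Suc_iff[OF \<sigma> s] s permsD[OF \<tau>] \<tau>_def w_def by auto
  qed
  have dv: "distinct vs" using order_iso_distinct[OF \<sigma> len iso] .
  have sw: "sorted_wrt (<) w"
    unfolding sorted_wrt_iff_nth_less using lw \<tau>_nth iso by auto
  have "set w \<subseteq> set vs" using lw len \<tau>_nth by (fastforce simp: in_set_conv_nth)
  moreover have "card (set w) = card (set vs)"
    using sw dv lw len by (simp add: distinct_card strict_sorted_iff)
  ultimately have "set w = set vs" by (simp add: card_subset_eq)
  then have "sort vs = w" using dv sw by (intro sorted_distinct_set_unique) (auto simp: strict_sorted_iff)
  moreover obtain s where s: "\<sigma> ! t = Suc s" "s < k" using perms_nth_mem[OF \<sigma> t] by (cases "\<sigma> ! t") auto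
  moreover have "\<tau> ! s = Suc t" using inv_perm_nth_eq_Suc_iff[OF \<sigma> s(2) t] s(1) \<tau>_def by simp
  ultimately show ?thesis using \<tau>_nth[OF s(2)] by simp
qed

lemma perms_split_at:
  assumes \<pi>: "\<pi> \<in> perms n" and m: "m < n" "\<pi> ! m = v"
  shows "\<pi> = take m \<pi> @ v # drop (Suc m) \<pi>" "v \<notin> set (take m \<pi>)" "set (take m \<pi>) \<subseteq> {1..n} - {v}"
    "set (drop (Suc m) \<pi>) = {1..n} - {v} - set (take m \<pi>)"
proof -
  have D: "length \<pi> = n" "distinct \<pi>" "set \<pi> = {1..n}" using permsD[OF \<pi>] by auto
  show split: "\<pi> = take m \<pi> @ v # drop (Suc m) \<pi>" using id_take_nth_drop[of m \<pi>] m D(1) by simp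
  then have "distinct (take m \<pi> @ v # drop (Suc m) \<pi>)" "set (take m \<pi> @ v # drop (Suc m) \<pi>) = {1..n}"
    using D by metis+
  then show "v \<notin> set (take m \<pi>)" "set (take m \<pi>) \<subseteq> {1..n} - {v}"
    "set (drop (Suc m) \<pi>) = {1..n} - {v} - set (take m \<pi>)" by auto
qed

section \<open>Containment through occurrence maps\<close>

text \<open>\<open>a 0, \<dots>, a (k+1)\<close> is the sequence \<open>i_0 < \<dots> < i_(k+1)\<close> (or \<open>j_0 < \<dots> < j_(k+1)\<close>) of the
  definition of \<open>contains\<close>.\<close>
definition occ_map :: "nat \<Rightarrow> nat \<Rightarrow> (nat \<Rightarrow> nat) \<Rightarrow> bool" where
  "occ_map n k a \<longleftrightarrow> a 0 = 0 \<and> a (Suc k) = Suc n \<and> strict_mono_on {0..Suc k} a"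

definition contains_maps :: "nat list \<Rightarrow> nat list \<Rightarrow> nat set \<Rightarrow> nat set \<Rightarrow> bool" where
  "contains_maps \<pi> \<sigma> X Y \<longleftrightarrow> (\<exists>a b. occ_map (length \<pi>) (length \<sigma>) a \<and> occ_map (length \<pi>) (length \<sigma>) b \<and>
     (\<forall>t\<in>{1..length \<sigma>}. \<pi> ! (a t - 1) = b (\<sigma> ! (t - 1))) \<and>
     (\<forall>x\<in>X. a (Suc x) = Suc (a x)) \<and> (\<forall>y\<in>Y. b (Suc y) = Suc (b y)))"

lemma occ_map_less_iff: "occ_map n k a \<Longrightarrow> x \<le> Suc k \<Longrightarrow> y \<le> Suc k \<Longrightarrow> a x < a y \<longleftrightarrow> x < y"
  unfolding occ_map_def using strict_mono_on_less[of "{0..Suc k}" a x y] by auto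

lemma occ_map_le: "occ_map n k a \<Longrightarrow> x \<le> Suc k \<Longrightarrow> a x \<le> Suc n"
  using occ_map_less_iff[of n k a x "Suc k"] unfolding occ_map_def by (cases "x = Suc k") auto

lemma occ_map_range: "occ_map n k a \<Longrightarrow> t \<in> {1..k} \<Longrightarrow> a t \<in> {1..n}"
  using occ_map_less_iff[of n k a 0 t] occ_map_less_iff[of n k a t "Suc k"] unfolding occ_map_def by auto

lemma occ_map_framed_sorted:
  assumes "sorted_wrt (<) xs" "set xs \<subseteq> {1..n}" "length xs = k"
  shows "occ_map n k (\<lambda>x. ([0] @ xs @ [Suc n]) ! x)"
proof -
  let ?I = "[0] @ xs @ [Suc n]"
  have "sorted_wrt (<) ?I" using assms(1,2) by (auto simp: sorted_wrt_append)
  then have "strict_mono_on {0..Suc k} (\<lambda>x. ?I ! x)"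
    using assms(3) by (intro strict_mono_onI) (auto simp: sorted_wrt_iff_nth_less)
  then show ?thesis using assms(3) unfolding occ_map_def by (simp add: nth_append)
qed

lemma sort_map_occ_map_perm:
  assumes "\<sigma> \<in> perms k" "occ_map n k b"
  shows "sort (map b \<sigma>) = map b [1..<Suc k]"
proof (rule sorted_distinct_set_unique)
  have inj: "inj_on b {1..k}"
    using occ_map_less_iff[OF assms(2)] by (intro inj_onI) (metis atLeastAtMost_iff le_SucI linorder_neq_iff)
  show "distinct (sort (map b \<sigma>))" using inj permsD[OF assms(1)] by (simp add: distinct_map)
  have "sorted_wrt (<) (map b [1..<Suc k])"
    unfolding sorted_wrt_iff_nth_less using occ_map_less_iff[OF assms(2)] by (auto simp del: upt_Suc)
  then show "sorted (map b [1..<Suc k])" "distinct (map b [1..<Suc k])" by (auto simp: strict_sorted_iff)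
  show "set (sort (map b \<sigma>)) = set (map b [1..<Suc k])"
    using permsD[OF assms(1)] by (simp add: atLeastLessThanSuc_atLeastAtMost del: upt_Suc)
qed simp

lemma contains_maps_imp_contains:
  assumes \<sigma>: "\<sigma> \<in> perms k" and \<pi>: "\<pi> \<in> perms n"
    and XY: "X \<subseteq> {0..k}" "Y \<subseteq> {0..k}" and c: "contains_maps \<pi> \<sigma> X Y"
  shows "contains \<pi> (\<sigma>, X, Y)"
proof -
  have lk: "length \<sigma> = k" and ln: "length \<pi> = n" using permsD[OF \<sigma>] permsD[OF \<pi>] by auto
  obtain a b where oa: "occ_map n k a" and ob: "occ_map n k b"
    and eq: "\<forall>t\<in>{1..k}. \<pi> ! (a t - 1) = b (\<sigma> ! (t - 1))"
    and hX: "\<forall>x\<in>X. a (Suc x) = Suc (a x)" and hY: "\<forall>y\<in>Y. b (Suc y) = Suc (b y)"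
    using c unfolding contains_maps_def lk ln by blast
  define ii where "ii = map a [1..<Suc k]"
  let ?vals = "map (\<lambda>i. \<pi> ! (i - 1)) ii"
  have vals: "?vals = map b \<sigma>"
  proof (rule nth_equalityI)
    show "length ?vals = length (map b \<sigma>)" using lk by (simp add: ii_def)
    fix t assume "t < length ?vals"
    then have "t < k" by (simp add: ii_def del: upt_Suc)
    then show "?vals ! t = map b \<sigma> ! t" using eq lk by (force simp: ii_def simp del: upt_Suc)
  qed
  have I: "([0] @ ii @ [length \<pi> + 1]) ! x = a x" if "x \<le> Suc k" for x
    unfolding ii_def ln using nth_framed_map[of a k "Suc n"] oa that by (simp add: occ_map_def)
  have J: "([0] @ sort ?vals @ [length \<pi> + 1]) ! x = b x" if "x \<le> Suc k" for x
    unfolding vals sort_map_occ_map_perm[OF \<sigma> ob] ln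
    using nth_framed_map[of b k "Suc n"] ob that by (simp add: occ_map_def)
  have iso: "?vals ! i < ?vals ! j \<longleftrightarrow> \<sigma> ! i < \<sigma> ! j" if "i < k" "j < k" for i j
  proof -
    have "\<sigma> ! i \<le> Suc k" "\<sigma> ! j \<le> Suc k" using perms_nth_mem[OF \<sigma>] that by fastforce+
    then show ?thesis using vals that lk occ_map_less_iff[OF ob] by simp
  qed
  show ?thesis
    unfolding contains_def prod.case Let_def
  proof (intro exI[of _ ii] conjI ballI allI impI)
    show "length ii = length \<sigma>" using lk by (simp add: ii_def)
    show "sorted_wrt (<) ii"
      unfolding ii_def sorted_wrt_iff_nth_less using occ_map_less_iff[OF oa] by (auto simp del: upt_Suc)
    show "set ii \<subseteq> {1..length \<pi>}" unfolding ii_def ln using occ_map_range[OF oa] by auto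
    show "?vals ! i < ?vals ! j \<longleftrightarrow> \<sigma> ! i < \<sigma> ! j" if "i < length \<sigma>" "j < length \<sigma>" for i j
      using iso that lk by simp
    show "([0] @ ii @ [length \<pi> + 1]) ! (x + 1) = ([0] @ ii @ [length \<pi> + 1]) ! x + 1" if "x \<in> X" for x
      using I[of x] I[of "x + 1"] hX that XY(1) by auto
    show "([0] @ sort ?vals @ [length \<pi> + 1]) ! (y + 1) = ([0] @ sort ?vals @ [length \<pi> + 1]) ! y + 1"
      if "y \<in> Y" for y
      using J[of y] J[of "y + 1"] hY that XY(2) by auto
  qed
qed

lemma contains_imp_contains_maps:
  assumes \<sigma>: "\<sigma> \<in> perms k" and \<pi>: "\<pi> \<in> perms n" and c: "contains \<pi> (\<sigma>, X, Y)"
  shows "contains_maps \<pi> \<sigma> X Y"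
proof -
  have lk: "length \<sigma> = k" and ln: "length \<pi> = n" using permsD[OF \<sigma>] permsD[OF \<pi>] by auto
  obtain ii where lii: "length ii = k" and sii: "sorted_wrt (<) ii" and rii: "set ii \<subseteq> {1..n}"
    and iso: "\<forall>a<k. \<forall>b<k. (map (\<lambda>i. \<pi> ! (i - 1)) ii ! a < map (\<lambda>i. \<pi> ! (i - 1)) ii ! b) = (\<sigma> ! a < \<sigma> ! b)"
    and hX: "\<forall>x\<in>X. ([0] @ ii @ [n + 1]) ! (x + 1) = ([0] @ ii @ [n + 1]) ! x + 1"
    and hY: "\<forall>y\<in>Y. ([0] @ sort (map (\<lambda>i. \<pi> ! (i - 1)) ii) @ [n + 1]) ! (y + 1) =
              ([0] @ sort (map (\<lambda>i. \<pi> ! (i - 1)) ii) @ [n + 1]) ! y + 1"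
    using c unfolding contains_def prod.case Let_def lk ln by blast
  define vals where "vals = map (\<lambda>i. \<pi> ! (i - 1)) ii"
  have lv: "length vals = k" using lii vals_def by simp
  have iso': "vals ! a < vals ! b \<longleftrightarrow> \<sigma> ! a < \<sigma> ! b" if "a < k" "b < k" for a b
    using iso that vals_def by blast
  have dv: "distinct vals" using order_iso_distinct[OF \<sigma> lv iso'] .
  have rv: "set vals \<subseteq> {1..n}"
  proof
    fix v assume "v \<in> set vals"
    then obtain t where t: "t < k" "v = \<pi> ! (ii ! t - 1)" using lii by (auto simp: vals_def in_set_conv_nth)
    have "ii ! t \<in> {1..n}" using rii t lii nth_mem by blast
    then have "ii ! t - 1 < n" by auto
    then show "v \<in> {1..n}" using t perms_nth_mem[OF \<pi>] by simp
  qed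
  define a where "a = (\<lambda>x. ([0] @ ii @ [Suc n]) ! x)"
  define b where "b = (\<lambda>x. ([0] @ sort vals @ [Suc n]) ! x)"
  have oa: "occ_map n k a" unfolding a_def by (rule occ_map_framed_sorted[OF sii rii lii])
  have ob: "occ_map n k b" unfolding b_def
    by (rule occ_map_framed_sorted) (use dv rv lv in \<open>auto simp: strict_sorted_iff\<close>)
  have "\<pi> ! (a t - 1) = b (\<sigma> ! (t - 1))" if t: "t \<in> {1..k}" for t
  proof -
    obtain t' where t': "t = Suc t'" "t' < k" using t by (cases t) auto
    obtain s where s: "\<sigma> ! t' = Suc s" "s < k" using perms_nth_mem[OF \<sigma> t'(2)] by (cases "\<sigma> ! t'") auto
    have "\<pi> ! (a t - 1) = vals ! t'" using t' lii unfolding a_def vals_def by (simp add: nth_append)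
    also have "\<dots> = sort vals ! s" using sort_nth_order_iso[OF \<sigma> lv iso' t'(2)] s(1) by simp
    also have "\<dots> = b (\<sigma> ! (t - 1))" using s t' lv unfolding b_def by (simp add: nth_append)
    finally show ?thesis .
  qed
  moreover have "\<forall>x\<in>X. a (Suc x) = Suc (a x)" using hX unfolding a_def by simp
  moreover have "\<forall>y\<in>Y. b (Suc y) = Suc (b y)" using hY unfolding b_def vals_def by simp
  ultimately show ?thesis unfolding contains_maps_def lk ln using oa ob by blast
qed

lemma contains_iff_contains_maps:
  assumes "\<sigma> \<in> perms k" "\<pi> \<in> perms n" "X \<subseteq> {0..k}" "Y \<subseteq> {0..k}"
  shows "contains \<pi> (\<sigma>, X, Y) \<longleftrightarrow> contains_maps \<pi> \<sigma> X Y"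
  using contains_imp_contains_maps contains_maps_imp_contains assms by metis

section \<open>Invariance under the symmetries\<close>

definition reflect_map :: "nat \<Rightarrow> nat \<Rightarrow> (nat \<Rightarrow> nat) \<Rightarrow> nat \<Rightarrow> nat" where
  "reflect_map n k a t = Suc n - a (Suc k - t)"

lemma occ_map_reflect_map:
  assumes "occ_map n k a"
  shows "occ_map n k (reflect_map n k a)"
  unfolding occ_map_def
proof (intro conjI strict_mono_onI)
  show "reflect_map n k a 0 = 0" "reflect_map n k a (Suc k) = Suc n"
    using assms unfolding reflect_map_def occ_map_def by simp_all
  fix r s assume "r \<in> {0..Suc k}" "s \<in> {0..Suc k}" "r < s"
  then have "a (Suc k - s) < a (Suc k - r)" using occ_map_less_iff[OF assms] by auto
  then show "reflect_map n k a r < reflect_map n k a s"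
    using occ_map_le[OF assms, of "Suc k - r"] unfolding reflect_map_def by simp
qed

lemma reflect_map_Suc:
  assumes "occ_map n k a" "x \<le> k" "a (Suc x) = Suc (a x)"
  shows "reflect_map n k a (Suc (k - x)) = Suc (reflect_map n k a (k - x))"
  using assms occ_map_le[OF assms(1), of "Suc x"] unfolding reflect_map_def by (simp add: Suc_diff_le)

lemma contains_maps_rev:
  assumes \<sigma>: "\<sigma> \<in> perms k" and \<pi>: "\<pi> \<in> perms n" and X: "X \<subseteq> {0..k}"
    and c: "contains_maps (rev \<pi>) \<sigma> X Y"
  shows "contains_maps \<pi> (rev \<sigma>) ((\<lambda>x. k - x) ` X) Y"
proof -
  have lk: "length \<sigma> = k" and ln: "length \<pi> = n" using permsD[OF \<sigma>] permsD[OF \<pi>] by auto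
  obtain a b where oa: "occ_map n k a" and ob: "occ_map n k b"
    and eq: "\<forall>t\<in>{1..k}. rev \<pi> ! (a t - 1) = b (\<sigma> ! (t - 1))"
    and hX: "\<forall>x\<in>X. a (Suc x) = Suc (a x)" and hY: "\<forall>y\<in>Y. b (Suc y) = Suc (b y)"
    using c unfolding contains_maps_def lk length_rev ln by blast
  have "\<pi> ! (reflect_map n k a t - 1) = b (rev \<sigma> ! (t - 1))" if t: "t \<in> {1..k}" for t
  proof -
    have u: "Suc k - t \<in> {1..k}" using t by auto
    have au: "a (Suc k - t) \<in> {1..n}" using occ_map_range[OF oa u] .
    have "a (Suc k - t) - 1 < n" "n - Suc (a (Suc k - t) - 1) = n - a (Suc k - t)" using au by auto
    then have "rev \<pi> ! (a (Suc k - t) - 1) = \<pi> ! (n - a (Suc k - t))" using ln by (simp add: rev_nth)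
    then have "\<pi> ! (reflect_map n k a t - 1) = rev \<pi> ! (a (Suc k - t) - 1)"
      unfolding reflect_map_def by simp
    also have "\<dots> = b (\<sigma> ! (Suc k - t - 1))" using eq u by blast
    also have "\<dots> = b (rev \<sigma> ! (t - 1))"
    proof -
      have "t - 1 < k" "k - Suc (t - 1) = Suc k - t - 1" using t by auto
      then show ?thesis using lk by (simp add: rev_nth)
    qed
    finally show ?thesis .
  qed
  moreover have "\<forall>x'\<in>(\<lambda>x. k - x) ` X. reflect_map n k a (Suc x') = Suc (reflect_map n k a x')"
    using reflect_map_Suc[OF oa] hX X by auto
  ultimately show ?thesis unfolding contains_maps_def length_rev lk ln
    using occ_map_reflect_map[OF oa] ob hY by blast
qed

lemma contains_maps_compl:
  assumes \<sigma>: "\<sigma> \<in> perms k" and \<pi>: "\<pi> \<in> perms n" and Y: "Y \<subseteq> {0..k}"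
    and c: "contains_maps (map (\<lambda>v. Suc n - v) \<pi>) \<sigma> X Y"
  shows "contains_maps \<pi> (map (\<lambda>v. Suc k - v) \<sigma>) X ((\<lambda>y. k - y) ` Y)"
proof -
  have lk: "length \<sigma> = k" and ln: "length \<pi> = n" using permsD[OF \<sigma>] permsD[OF \<pi>] by auto
  obtain a b where oa: "occ_map n k a" and ob: "occ_map n k b"
    and eq: "\<forall>t\<in>{1..k}. map (\<lambda>v. Suc n - v) \<pi> ! (a t - 1) = b (\<sigma> ! (t - 1))"
    and hX: "\<forall>x\<in>X. a (Suc x) = Suc (a x)" and hY: "\<forall>y\<in>Y. b (Suc y) = Suc (b y)"
    using c unfolding contains_maps_def lk length_map ln by blast
  have "\<pi> ! (a t - 1) = reflect_map n k b (map (\<lambda>v. Suc k - v) \<sigma> ! (t - 1))" if t: "t \<in> {1..k}" for t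
  proof -
    have at: "a t - 1 < n" using occ_map_range[OF oa t] by auto
    have "\<pi> ! (a t - 1) \<le> n" "\<sigma> ! (t - 1) \<le> k"
      using perms_nth_mem[OF \<pi> at] perms_nth_mem[OF \<sigma>] t by auto
    moreover have "b (\<sigma> ! (t - 1)) = Suc n - \<pi> ! (a t - 1)" using eq t at ln by force
    moreover have "map (\<lambda>v. Suc k - v) \<sigma> ! (t - 1) = Suc k - \<sigma> ! (t - 1)" using t lk by auto
    ultimately show ?thesis unfolding reflect_map_def by (simp add: Suc_diff_le)
  qed
  moreover have "\<forall>y'\<in>(\<lambda>y. k - y) ` Y. reflect_map n k b (Suc y') = Suc (reflect_map n k b y')"
    using reflect_map_Suc[OF ob] hY Y by auto
  ultimately show ?thesis unfolding contains_maps_def length_map lk ln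
    using oa occ_map_reflect_map[OF ob] hX by blast
qed

lemma contains_maps_inv:
  assumes \<sigma>: "\<sigma> \<in> perms k" and \<pi>: "\<pi> \<in> perms n" and c: "contains_maps (inv_perm \<pi>) \<sigma> X Y"
  shows "contains_maps \<pi> (inv_perm \<sigma>) Y X"
proof -
  have lk: "length \<sigma> = k" and ln: "length \<pi> = n" using permsD[OF \<sigma>] permsD[OF \<pi>] by auto
  obtain a b where oa: "occ_map n k a" and ob: "occ_map n k b"
    and eq: "\<forall>t\<in>{1..k}. inv_perm \<pi> ! (a t - 1) = b (\<sigma> ! (t - 1))"
    and hX: "\<forall>x\<in>X. a (Suc x) = Suc (a x)" and hY: "\<forall>y\<in>Y. b (Suc y) = Suc (b y)"
    using c unfolding contains_maps_def lk length_inv_perm ln by blast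
  have "\<pi> ! (b s - 1) = a (inv_perm \<sigma> ! (s - 1))" if s: "s \<in> {1..k}" for s
  proof -
    define t where "t = inv_perm \<sigma> ! (s - 1)"
    have t: "t \<in> {1..k}" using perms_nth_mem[OF inv_perm_perms[OF \<sigma>]] s t_def by auto
    then have "\<sigma> ! (t - 1) = s"
      using inv_perm_nth_eq_Suc_iff[OF \<sigma>, of "s - 1" "t - 1"] s t_def by auto
    then have "inv_perm \<pi> ! (a t - 1) = Suc (b s - 1)" using eq t occ_map_range[OF ob s] by auto
    moreover have "a t \<in> {1..n}" "b s \<in> {1..n}" using occ_map_range[OF oa t] occ_map_range[OF ob s] .
    ultimately show ?thesis
      using inv_perm_nth_eq_Suc_iff[OF \<pi>, of "a t - 1" "b s - 1"] t_def by auto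
  qed
  then show ?thesis unfolding contains_maps_def length_inv_perm lk ln using oa ob hX hY by blast
qed

lemma is_bvpatD: "is_bvpat (\<sigma>, X, Y) \<Longrightarrow> \<sigma> \<in> perms (length \<sigma>) \<and> X \<subseteq> {0..length \<sigma>} \<and> Y \<subseteq> {0..length \<sigma>}"
  unfolding is_bvpat_def by simp

lemma reflect_image_subset: "X \<subseteq> {0..k} \<Longrightarrow> (\<lambda>x. k - x) ` X \<subseteq> {0..(k::nat)}"
  by auto

lemma reflect_image_reflect_image: "X \<subseteq> {0..k} \<Longrightarrow> (\<lambda>x. k - x) ` (\<lambda>x. k - x) ` X = (X::nat set)"
  by (force simp: image_image intro: image_cong[where g = id, simplified])

lemma is_bvpat_pat_rev: "is_bvpat p \<Longrightarrow> is_bvpat (pat_rev p)"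
  by (cases p) (auto simp: is_bvpat_def pat_rev_def rev_perms)

lemma is_bvpat_pat_compl: "is_bvpat p \<Longrightarrow> is_bvpat (pat_compl p)"
  by (cases p) (auto simp: is_bvpat_def pat_compl_def compl_perms[simplified])

lemma is_bvpat_pat_inv: "is_bvpat p \<Longrightarrow> is_bvpat (pat_inv p)"
  by (cases p) (auto simp: is_bvpat_def pat_inv_def inv_perm_perms)

lemma contains_pat_rev:
  assumes "is_bvpat p" "\<pi> \<in> perms n"
  shows "contains \<pi> (pat_rev p) \<longleftrightarrow> contains (rev \<pi>) p"
proof -
  obtain \<sigma> X Y where p: "p = (\<sigma>, X, Y)" by (cases p) auto
  define k where "k = length \<sigma>"
  have b: "\<sigma> \<in> perms k" "X \<subseteq> {0..k}" "Y \<subseteq> {0..k}" using is_bvpatD assms(1) p k_def by auto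
  note \<pi>' = rev_perms[OF assms(2)] and \<sigma>' = rev_perms[OF b(1)] and X' = reflect_image_subset[OF b(2)]
  have "contains_maps \<pi> (rev \<sigma>) ((\<lambda>x. k - x) ` X) Y \<longleftrightarrow> contains_maps (rev \<pi>) \<sigma> X Y"
    using contains_maps_rev[OF \<sigma>' \<pi>' X', of Y] contains_maps_rev[OF b(1) assms(2) b(2)]
    by (auto simp: reflect_image_reflect_image[OF b(2)])
  then show ?thesis
    unfolding p pat_rev_def prod.case k_def[symmetric]
    using contains_iff_contains_maps[OF \<sigma>' assms(2) X' b(3)] contains_iff_contains_maps[OF b(1) \<pi>' b(2,3)]
    by simp
qed

lemma contains_pat_compl:
  assumes "is_bvpat p" "\<pi> \<in> perms n"
  shows "contains \<pi> (pat_compl p) \<longleftrightarrow> contains (map (\<lambda>v. Suc n - v) \<pi>) p"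
proof -
  obtain \<sigma> X Y where p: "p = (\<sigma>, X, Y)" by (cases p) auto
  define k where "k = length \<sigma>"
  have b: "\<sigma> \<in> perms k" "X \<subseteq> {0..k}" "Y \<subseteq> {0..k}" using is_bvpatD assms(1) p k_def by auto
  note \<pi>' = compl_perms[OF assms(2)] and \<sigma>' = compl_perms[OF b(1)] and Y' = reflect_image_subset[OF b(3)]
  have "contains_maps \<pi> (map (\<lambda>v. Suc k - v) \<sigma>) X ((\<lambda>y. k - y) ` Y)
      \<longleftrightarrow> contains_maps (map (\<lambda>v. Suc n - v) \<pi>) \<sigma> X Y"
    using contains_maps_compl[OF \<sigma>' \<pi>' Y', of X] contains_maps_compl[OF b(1) assms(2) b(3)]
    by (auto simp del: map_map
        simp add: reflect_image_reflect_image[OF b(3)] compl_compl_perm[OF b(1)] compl_compl_perm[OF assms(2)])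
  then show ?thesis
    unfolding p pat_compl_def prod.case k_def[symmetric] Suc_eq_plus1[symmetric]
    using contains_iff_contains_maps[OF \<sigma>' assms(2) b(2) Y'] contains_iff_contains_maps[OF b(1) \<pi>' b(2,3)]
    by simp
qed

lemma contains_pat_inv:
  assumes "is_bvpat p" "\<pi> \<in> perms n"
  shows "contains \<pi> (pat_inv p) \<longleftrightarrow> contains (inv_perm \<pi>) p"
proof -
  obtain \<sigma> X Y where p: "p = (\<sigma>, X, Y)" by (cases p) auto
  define k where "k = length \<sigma>"
  have b: "\<sigma> \<in> perms k" "X \<subseteq> {0..k}" "Y \<subseteq> {0..k}" using is_bvpatD assms(1) p k_def by auto
  note \<pi>' = inv_perm_perms[OF assms(2)] and \<sigma>' = inv_perm_perms[OF b(1)]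
  have "contains_maps \<pi> (inv_perm \<sigma>) Y X \<longleftrightarrow> contains_maps (inv_perm \<pi>) \<sigma> X Y"
    using contains_maps_inv[OF \<sigma>' \<pi>', of Y X] contains_maps_inv[OF b(1) assms(2)]
    by (auto simp: inv_perm_inv_perm[OF b(1)] inv_perm_inv_perm[OF assms(2)])
  then show ?thesis
    unfolding p pat_inv_def prod.case
    using contains_iff_contains_maps[OF \<sigma>' assms(2) b(3,2)] contains_iff_contains_maps[OF b(1) \<pi>' b(2,3)]
    by simp
qed

lemma avoiders_eq_if_involution:
  assumes f: "\<And>\<pi>. \<pi> \<in> perms n \<Longrightarrow> f \<pi> \<in> perms n \<and> f (f \<pi>) = \<pi>"
    and c: "\<And>\<pi>. \<pi> \<in> perms n \<Longrightarrow> contains \<pi> q \<longleftrightarrow> contains (f \<pi>) p"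
  shows "avoiders n q = avoiders n p"
proof -
  have "bij_betw f {\<pi> \<in> perms n. \<not> contains \<pi> q} {\<pi> \<in> perms n. \<not> contains \<pi> p}"
  proof (rule bij_betw_byWitness[where f' = f])
    show "f ` {\<pi> \<in> perms n. \<not> contains \<pi> p} \<subseteq> {\<pi> \<in> perms n. \<not> contains \<pi> q}"
    proof
      fix x assume "x \<in> f ` {\<pi> \<in> perms n. \<not> contains \<pi> p}"
      then obtain \<pi> where "\<pi> \<in> perms n" "\<not> contains \<pi> p" "x = f \<pi>" by blast
      then show "x \<in> {\<pi> \<in> perms n. \<not> contains \<pi> q}" using f[of \<pi>] c[of "f \<pi>"] by auto
    qed
  qed (use f c in auto)
  then show ?thesis unfolding avoiders_def by (rule bij_betw_same_card)
qed

lemma avoiders_sym_class: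
  assumes "q \<in> sym_class p" "is_bvpat p"
  shows "is_bvpat q \<and> avoiders n q = avoiders n p"
  using assms(1)
proof (induction rule: sym_class.induct)
  case base
  then show ?case using assms(2) by simp
next
  case (inv q)
  have "avoiders n (pat_inv q) = avoiders n q"
    by (rule avoiders_eq_if_involution[where f = inv_perm])
      (use inv inv_perm_perms inv_perm_inv_perm contains_pat_inv in auto)
  then show ?case using inv is_bvpat_pat_inv by simp
next
  case (rev q)
  have "avoiders n (pat_rev q) = avoiders n q"
    by (rule avoiders_eq_if_involution[where f = rev]) (use rev rev_perms contains_pat_rev in auto)
  then show ?case using rev is_bvpat_pat_rev by simp
next
  case (compl q)
  have "avoiders n (pat_compl q) = avoiders n q"
    by (rule avoiders_eq_if_involution[where f = "map (\<lambda>v. Suc n - v)"])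
      (use compl compl_perms compl_compl_perm contains_pat_compl in auto)
  then show ?case using compl is_bvpat_pat_compl by simp
qed

section \<open>Counting the avoiders of the seed patterns\<close>

lemma card_perms_sorted_after_1:
  fixes srt :: "nat set \<Rightarrow> nat list"
  assumes srt: "\<And>S. finite S \<Longrightarrow> set (srt S) = S \<and> distinct (srt S) \<and> sorted_wrt R (srt S)"
    and uniq: "\<And>xs. distinct xs \<Longrightarrow> sorted_wrt R xs \<Longrightarrow> srt (set xs) = xs"
    and n: "n \<ge> 1"
  shows "card {\<pi> \<in> perms n. \<forall>m<n. \<pi> ! m = 1 \<longrightarrow> sorted_wrt R (drop (Suc m) \<pi>)}
       = card {xs. distinct xs \<and> set xs \<subseteq> {1..n} - {1}}"
proof -
  let ?A = "{1..n} - {1}"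
  let ?L = "{xs. distinct xs \<and> set xs \<subseteq> ?A}"
  let ?S = "{\<pi> \<in> perms n. \<forall>m<n. \<pi> ! m = 1 \<longrightarrow> sorted_wrt R (drop (Suc m) \<pi>)}"
  define g where "g xs = xs @ 1 # srt (?A - set xs)" for xs
  have "g xs \<in> ?S \<and> takeWhile (\<lambda>x. x \<noteq> 1) (g xs) = xs" if xs: "xs \<in> ?L" for xs
  proof -
    note s = srt[of "?A - set xs", simplified]
    have n1: "1 \<notin> set xs" using xs by auto
    have tw: "takeWhile (\<lambda>x. x \<noteq> 1) (xs @ 1 # ys) = xs" for ys using n1 by (induction xs) auto
    have "set (g xs) = {1..n}" "distinct (g xs)" using s xs n unfolding g_def by auto
    then have perm: "g xs \<in> perms n" by (metis permsI distinct_card card_atLeastAtMost diff_Suc_1)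
    have "m = length xs" if "m < n" "g xs ! m = 1" for m
      using perms_nth_eq_iff[OF perm, of m "length xs"] that permsD[OF perm] by (simp add: g_def)
    then have "\<forall>m<n. g xs ! m = 1 \<longrightarrow> sorted_wrt R (drop (Suc m) (g xs))" using s by (auto simp: g_def)
    moreover have "takeWhile (\<lambda>x. x \<noteq> 1) (g xs) = xs" using tw by (simp add: g_def)
    ultimately show ?thesis using perm by simp
  qed
  moreover have "takeWhile (\<lambda>x. x \<noteq> 1) \<pi> \<in> ?L \<and> g (takeWhile (\<lambda>x. x \<noteq> 1) \<pi>) = \<pi>" if \<pi>: "\<pi> \<in> ?S" for \<pi>
  proof -
    have pp: "\<pi> \<in> perms n" using \<pi> by simp
    obtain m where m: "m < n" "\<pi> ! m = 1" using perms_ex_nth[OF pp, of 1] n by auto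
    note split = perms_split_at[OF pp m]
    have tw: "takeWhile (\<lambda>x. x \<noteq> 1) \<pi> = take m \<pi>"
      using takeWhile_append2[of "take m \<pi>" "\<lambda>x. x \<noteq> 1" "1 # drop (Suc m) \<pi>"] split(1,2) by fastforce
    have "sorted_wrt R (drop (Suc m) \<pi>)" using \<pi> m by blast
    moreover have "distinct (drop (Suc m) \<pi>)" "distinct (take m \<pi>)" using permsD[OF pp] by auto
    ultimately have "srt (?A - set (take m \<pi>)) = drop (Suc m) \<pi>" using uniq split(4) by metis
    then have "g (take m \<pi>) = \<pi>" using split(1) by (simp add: g_def)
    then show ?thesis using tw split(3) \<open>distinct (take m \<pi>)\<close> by simp
  qed
  ultimately have "bij_betw g ?L ?S"
    by (intro bij_betw_byWitness[where f' = "takeWhile (\<lambda>x. x \<noteq> 1)"]) blast+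
  then show ?thesis by (simp add: bij_betw_same_card)
qed

lemma contains_maps_seedD:
  assumes \<pi>: "\<pi> \<in> perms n" and m: "m < n" "\<pi> ! m = 1" and s: "(s2, s3) \<in> {(2, 3), (3, 2)}"
    and c: "contains_maps \<pi> [1, s2, s3] X {0}"
  shows "\<exists>i j. m < i \<and> i < j \<and> j < n \<and> (2 \<in> X \<longrightarrow> j = Suc i) \<and> (\<pi> ! i < \<pi> ! j \<longleftrightarrow> s2 < s3)"
proof -
  obtain a b where oa: "occ_map n 3 a" and ob: "occ_map n 3 b"
    and eq: "\<forall>t\<in>{1..3}. \<pi> ! (a t - 1) = b ([1, s2, s3] ! (t - 1))"
    and hX: "\<forall>x\<in>X. a (Suc x) = Suc (a x)" and b1: "b 1 = 1"
    using c permsD[OF \<pi>] unfolding contains_maps_def by (auto simp: occ_map_def numeral_3_eq_3)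
  have a: "a 1 \<in> {1..n}" "a 2 \<in> {1..n}" "a 3 \<in> {1..n}" "a 1 < a 2" "a 2 < a 3"
    using occ_map_range[OF oa] occ_map_less_iff[OF oa] by auto
  have "\<pi> ! (a 1 - 1) = 1" using eq b1 by auto
  then have "a 1 - 1 = m" using perms_nth_eq_iff[OF \<pi>, of "a 1 - 1" m] a m by auto
  moreover have "\<pi> ! (a 2 - 1) = b s2" "\<pi> ! (a 3 - 1) = b s3"
    using eq by (auto simp: numeral_2_eq_2 numeral_3_eq_3)
  moreover have "b s2 < b s3 \<longleftrightarrow> s2 < s3" using occ_map_less_iff[OF ob, of s2 s3] s by auto
  moreover have "2 \<in> X \<longrightarrow> a 3 = Suc (a 2)" using hX by (auto simp: numeral_2_eq_2 numeral_3_eq_3)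
  ultimately show ?thesis using a by (intro exI[of _ "a 2 - 1"] exI[of _ "a 3 - 1"]) auto
qed

lemma contains_maps_seedI:
  assumes \<pi>: "\<pi> \<in> perms n" and m: "m < n" "\<pi> ! m = 1" and s: "(s2, s3) \<in> {(2, 3), (3, 2)}"
    and X: "X \<subseteq> {2}"
    and ij: "m < i" "i < j" "j < n" "2 \<in> X \<longrightarrow> j = Suc i" "\<pi> ! i < \<pi> ! j \<longleftrightarrow> s2 < s3"
  shows "contains_maps \<pi> [1, s2, s3] X {0}"
proof -
  have v: "\<pi> ! i \<in> {1..n}" "\<pi> ! j \<in> {1..n}" using perms_nth_mem[OF \<pi>] ij by auto
  have ne: "\<pi> ! i \<noteq> 1" "\<pi> ! j \<noteq> 1" "\<pi> ! i \<noteq> \<pi> ! j"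
    using perms_nth_eq_iff[OF \<pi>] ij m by (metis less_trans less_irrefl)+
  define a where "a t = [0, Suc m, Suc i, Suc j, Suc n] ! t" for t
  define b where "b t = (if t = s2 then \<pi> ! i else if t = s3 then \<pi> ! j else [0, 1, 0, 0, Suc n] ! t)" for t
  have "occ_map n 3 a" unfolding occ_map_def
  proof (intro conjI strict_mono_on_atLeastAtMost_SucI)
    fix t :: nat assume "t < Suc 3"
    then have "t = 0 \<or> t = 1 \<or> t = 2 \<or> t = 3" by auto
    then show "a t < a (Suc t)" unfolding a_def using ij by (auto simp: numeral_2_eq_2 numeral_3_eq_3)
  qed (simp_all add: a_def)
  moreover have "occ_map n 3 b" unfolding occ_map_def
  proof (intro conjI strict_mono_on_atLeastAtMost_SucI)
    fix t :: nat assume "t < Suc 3"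
    then have "t = 0 \<or> t = 1 \<or> t = 2 \<or> t = 3" by auto
    then show "b t < b (Suc t)" unfolding b_def using s v ne ij(5)
      by (auto simp: numeral_2_eq_2 numeral_3_eq_3)
  qed (use s in \<open>auto simp: b_def\<close>)
  moreover have "\<forall>t\<in>{1..3}. \<pi> ! (a t - 1) = b ([1, s2, s3] ! (t - 1))"
  proof
    fix t :: nat assume "t \<in> {1..3}"
    then have "t = 1 \<or> t = 2 \<or> t = 3" by auto
    then show "\<pi> ! (a t - 1) = b ([1, s2, s3] ! (t - 1))" unfolding a_def b_def using s m
      by (auto simp: numeral_2_eq_2 numeral_3_eq_3)
  qed
  moreover have "\<forall>x\<in>X. a (Suc x) = Suc (a x)" using X ij(4) by (auto simp: a_def numeral_2_eq_2)
  moreover have "b 1 = Suc (b 0)" using s by (auto simp: b_def)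
  ultimately show ?thesis using permsD[OF \<pi>] unfolding contains_maps_def
    by (intro exI[of _ a] exI[of _ b]) (simp add: numeral_3_eq_3)
qed

lemma seed_perms: "(s2, s3) \<in> {(2, 3), (3, 2)} \<Longrightarrow> [1, s2, s3] \<in> perms 3"
  by (rule permsI) (auto simp: numeral_2_eq_2 numeral_3_eq_3)

lemma avoids_seed_iff:
  assumes \<pi>: "\<pi> \<in> perms n" and n: "n \<ge> 1" and s: "(s2, s3) \<in> {(2, 3), (3, 2)}" and X: "X \<in> {{}, {2}}"
    and R: "R = (if s2 < s3 then (>) else (<))"
  shows "\<not> contains \<pi> ([1, s2, s3], X, {0}) \<longleftrightarrow> (\<forall>m<n. \<pi> ! m = 1 \<longrightarrow> sorted_wrt R (drop (Suc m) \<pi>))"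
proof -
  have ln: "length \<pi> = n" using permsD[OF \<pi>] by simp
  obtain m where m: "m < n" "\<pi> ! m = 1" using perms_ex_nth[OF \<pi>, of 1] n by auto
  have all_m: "(\<forall>m<n. \<pi> ! m = 1 \<longrightarrow> sorted_wrt R (drop (Suc m) \<pi>)) \<longleftrightarrow> sorted_wrt R (drop (Suc m) \<pi>)"
    using m perms_nth_eq_iff[OF \<pi>, of _ m] by auto
  have X': "X \<subseteq> {0..3}" "X \<subseteq> {2}" using X by auto
  have "contains \<pi> ([1, s2, s3], X, {0}) \<longleftrightarrow>
    (\<exists>i j. m < i \<and> i < j \<and> j < n \<and> (2 \<in> X \<longrightarrow> j = Suc i) \<and> (\<pi> ! i < \<pi> ! j \<longleftrightarrow> s2 < s3))"
    using contains_iff_contains_maps[OF seed_perms[OF s] \<pi> X'(1), of "{0}"]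
      contains_maps_seedD[OF \<pi> m s] contains_maps_seedI[OF \<pi> m s X'(2)] by auto
  moreover have "R (\<pi> ! i) (\<pi> ! j) \<longleftrightarrow> \<not> (\<pi> ! i < \<pi> ! j \<longleftrightarrow> s2 < s3)" if "i < j" "j < n" for i j
    using perms_nth_eq_iff[OF \<pi>, of i j] that R s by auto
  moreover have "transp R" using R by (auto simp: transp_def)
  ultimately show ?thesis
    using X sorted_wrt_drop_iff[of R "Suc m" \<pi>] sorted_wrt_drop_iff_adjacent[of R "Suc m" \<pi>]
    unfolding all_m ln by (auto simp: Suc_le_eq)
qed

lemma avoiders_seed:
  assumes n: "n \<ge> 1" and s: "(s2, s3) \<in> {(2, 3), (3, 2)}" and X: "X \<in> {{}, {2}}"
  shows "real (avoiders n ([1, s2, s3], X, {0})) = (\<Sum>k = 0..n-1. fact (n - 1) / fact k)"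
proof -
  define R :: "nat \<Rightarrow> nat \<Rightarrow> bool" where "R = (if s2 < s3 then (>) else (<))"
  define srt :: "nat set \<Rightarrow> nat list"
    where "srt = (if s2 < s3 then (\<lambda>S. rev (sorted_list_of_set S)) else sorted_list_of_set)"
  have "set (srt S) = S \<and> distinct (srt S) \<and> sorted_wrt R (srt S)" if "finite S" for S
    using that unfolding srt_def R_def by (auto simp: sorted_wrt_rev strict_sorted_list_of_set)
  moreover have "srt (set xs) = xs" if "distinct xs" "sorted_wrt R xs" for xs
  proof -
    have "sorted_wrt (<) (if s2 < s3 then rev xs else xs)"
      using that by (cases "s2 < s3") (simp_all add: R_def sorted_wrt_rev)
    then have "sorted_list_of_set (set (if s2 < s3 then rev xs else xs)) = (if s2 < s3 then rev xs else xs)"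
      by (intro sorted_distinct_set_unique) (auto simp: strict_sorted_iff)
    then show ?thesis by (simp add: srt_def split: if_splits)
  qed
  moreover have "{\<pi> \<in> perms n. \<not> contains \<pi> ([1, s2, s3], X, {0})}
      = {\<pi> \<in> perms n. \<forall>m<n. \<pi> ! m = 1 \<longrightarrow> sorted_wrt R (drop (Suc m) \<pi>)}"
    using avoids_seed_iff[OF _ n s X R_def] by blast
  ultimately have "avoiders n ([1, s2, s3], X, {0}) = card {xs. distinct xs \<and> set xs \<subseteq> {1..n} - {1}}"
    unfolding avoiders_def using card_perms_sorted_after_1[OF _ _ n] by presburger
  moreover have "card ({1..n} - {1}) = n - 1" using n by simp
  ultimately show ?thesis using card_distinct_lists_subset[of "{1..n} - {1}"] by simp
qed

lemma inv_perm_seed: "(s2, s3) \<in> {(2, 3), (3, 2)} \<Longrightarrow> inv_perm [1, s2, s3] = [1, s2, s3]"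
  by (rule inv_perm_eqI[OF seed_perms seed_perms])
    (auto simp: less_Suc_eq numeral_2_eq_2 numeral_3_eq_3 nth_Cons split: nat.splits)

lemma avoiders_seed_class:
  assumes p: "p \<in> sym_class ([1, s2, s3], X, Y)" and s: "(s2, s3) \<in> {(2, 3), (3, 2)}"
    and XY: "(X, Y) \<in> {({}, {0}), ({0}, {2})}" and n: "n \<ge> 1"
  shows "real (avoiders n p) = (\<Sum>k = 0..n-1. fact (n - 1) / fact k)"
proof -
  have bv: "is_bvpat ([1, s2, s3], X, Y)"
    using seed_perms[OF s] XY unfolding is_bvpat_def by (auto simp: numeral_3_eq_3)
  have "avoiders n p = avoiders n ([1, s2, s3], X, Y)" using avoiders_sym_class[OF p bv] by simp
  moreover have "avoiders n ([1, s2, s3], X, Y) = avoiders n ([1, s2, s3], Y, X)"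
    using avoiders_sym_class[OF sym_class.inv[OF sym_class.base] bv] inv_perm_seed[OF s]
    by (simp add: pat_inv_def)
  ultimately show ?thesis
    using XY avoiders_seed[OF n s, of "{}"] avoiders_seed[OF n s, of "{2}"] by auto
qed

theorem mainTheorem9:
  fixes p :: bvpat and n :: nat
  assumes "p \<in> sym_class ([1,2,3], {}, {0}) \<union> sym_class ([1,2,3], {0}, {2})
             \<union> sym_class ([1,3,2], {}, {0}) \<union> sym_class ([1,3,2], {0}, {2})"
    and "n \<ge> 1"
  shows "real (avoiders n p) = (\<Sum>k = 0..n-1. fact (n - 1) / fact k)"
proof -
  obtain s2 s3 X Y where "p \<in> sym_class ([1, s2, s3], X, Y)"
    and "(s2, s3) \<in> {(2, 3), (3, 2)}" and "(X, Y) \<in> {({}, {0}), ({0}, {2})}"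
    using assms(1) by blast
  then show ?thesis using avoiders_seed_class assms(2) by blast
qed

end
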